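(* Let $\mathcal{G}\simeq\mathcal{H}$ be equivalent graph sequences and let $K$ be a field. Then $\beta_K(\mathcal{G})=\beta_K(\mathcal{H})$.
   Context: A graph sequence is a sequence $\mathcal{G}=\{G_n\}$ of finite simple graphs with uniformly bounded vertex degrees and $|V(G_n)|\to\infty$. For graph sequences with $V(H_n)=V(G_n)$, $\mathcal{H}\prec\mathcal{G}$ means there is an integer $L>0$ with $d_{G_n}(x,y)\le L\,d_{H_n}(x,y)$ for all $n,x,y$ (shortest path metrics), and $\mathcal{G}\simeq\mathcal{H}$ means $\mathcal{H}\prec\mathcal{G}$ and $\mathcal{G}\prec\mathcal{H}$. For a finite graph $G$, $\varepsilon_K(G)$ is the $K$-vector space spanned by oriented edges with $(x,y)=-(y,x)$; a cycle $(x_1,\dots,x_m,x_1)$ gives the vector $\sum_{i=1}^{m-1}(x_i,x_{i+1})+(x_m,x_1)$; $C^q_K(G)$ is the subspace spanned by the vectors of cycles of length at most $q$. $s^q_K(\mathcal{G})=\liminf_n \frac{|E(G_n)|-\dim_K C^q_K(G_n)}{|V(G_n)|}-1$ and $\beta_K(\mathcal{G})=\inf_q s^q_K(\mathcal{G})$. *)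

theory Defs
  imports "HOL-Analysis.Analysis" "HOL-Library.Extended_Nat" "HOL-Library.Function_Algebras"
begin

definition simple_graph :: "'v set \<Rightarrow> ('v \<Rightarrow> 'v \<Rightarrow> bool) \<Rightarrow> bool" where
  "simple_graph V E \<longleftrightarrow> finite V \<and> (\<forall>x y. E x y \<longrightarrow> x \<in> V \<and> y \<in> V)
     \<and> (\<forall>x y. E x y \<longrightarrow> E y x) \<and> (\<forall>x. \<not> E x x)"

definition graph_seq :: "(nat \<Rightarrow> 'v set) \<Rightarrow> (nat \<Rightarrow> 'v \<Rightarrow> 'v \<Rightarrow> bool) \<Rightarrow> bool" where
  "graph_seq V E \<longleftrightarrow> (\<forall>n. simple_graph (V n) (E n))
     \<and> (\<exists>D::nat. \<forall>n x. card {y. E n x y} \<le> D)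
     \<and> filterlim (\<lambda>n. card (V n)) at_top sequentially"

definition is_walk :: "('v \<Rightarrow> 'v \<Rightarrow> bool) \<Rightarrow> 'v \<Rightarrow> 'v \<Rightarrow> 'v list \<Rightarrow> bool" where
  "is_walk E x y xs \<longleftrightarrow> xs \<noteq> [] \<and> hd xs = x \<and> last xs = y
     \<and> (\<forall>i. Suc i < length xs \<longrightarrow> E (xs ! i) (xs ! Suc i))"

definition gdist :: "('v \<Rightarrow> 'v \<Rightarrow> bool) \<Rightarrow> 'v \<Rightarrow> 'v \<Rightarrow> enat" where
  "gdist E x y = (if \<exists>xs. is_walk E x y xs
     then enat (LEAST k. \<exists>xs. is_walk E x y xs \<and> length xs = Suc k) else \<infinity>)"

text \<open>H \<prec> G: exists L > 0 with d_G \<le> L d_H.\<close>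
definition seq_prec :: "(nat \<Rightarrow> 'v set) \<Rightarrow> (nat \<Rightarrow> 'v \<Rightarrow> 'v \<Rightarrow> bool) \<Rightarrow> (nat \<Rightarrow> 'v \<Rightarrow> 'v \<Rightarrow> bool) \<Rightarrow> bool" where
  "seq_prec V H G \<longleftrightarrow> (\<exists>L::nat. L > 0 \<and>
     (\<forall>n. \<forall>x\<in>V n. \<forall>y\<in>V n. gdist (G n) x y \<le> enat L * gdist (H n) x y))"

definition seq_equiv :: "(nat \<Rightarrow> 'v set) \<Rightarrow> (nat \<Rightarrow> 'v \<Rightarrow> 'v \<Rightarrow> bool) \<Rightarrow> (nat \<Rightarrow> 'v \<Rightarrow> 'v \<Rightarrow> bool) \<Rightarrow> bool" where
  "seq_equiv V G H \<longleftrightarrow> seq_prec V H G \<and> seq_prec V G H"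

definition num_edges :: "('v \<Rightarrow> 'v \<Rightarrow> bool) \<Rightarrow> nat" where
  "num_edges E = card {{x, y} | x y. E x y}"

definition cycles_upto :: "('v \<Rightarrow> 'v \<Rightarrow> bool) \<Rightarrow> nat \<Rightarrow> 'v list set" where
  "cycles_upto E q = {xs. 3 \<le> length xs \<and> length xs \<le> q \<and> distinct xs \<and>
     (\<forall>i < length xs. E (xs ! i) (xs ! ((Suc i) mod length xs)))}"

definition oedge :: "'v \<Rightarrow> 'v \<Rightarrow> ('v \<times> 'v \<Rightarrow> 'k::field)" where
  "oedge x y = (\<lambda>p. (if p = (x, y) then 1 else 0) - (if p = (y, x) then 1 else 0))"

definition cycle_vec :: "'v list \<Rightarrow> ('v \<times> 'v \<Rightarrow> 'k::field)" where
  "cycle_vec xs = (\<lambda>p. \<Sum>i<length xs. oedge (xs ! i) (xs ! ((Suc i) mod length xs)) p)"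

definition dim_cycle_space :: "'k::field itself \<Rightarrow> ('v \<Rightarrow> 'v \<Rightarrow> bool) \<Rightarrow> nat \<Rightarrow> nat" where
  "dim_cycle_space K E q =
     Vector_Spaces.vector_space.dim (\<lambda>(c::'k) (f::'v \<times> 'v \<Rightarrow> 'k) p. c * f p) (cycle_vec ` cycles_upto E q)"

definition s_q :: "'k::field itself \<Rightarrow> (nat \<Rightarrow> 'v set) \<Rightarrow> (nat \<Rightarrow> 'v \<Rightarrow> 'v \<Rightarrow> bool) \<Rightarrow> nat \<Rightarrow> ereal" where
  "s_q K V G q = liminf (\<lambda>n. ereal ((real (num_edges (G n)) - real (dim_cycle_space K (G n) q))
        / real (card (V n)))) - 1"

definition beta :: "'k::field itself \<Rightarrow> (nat \<Rightarrow> 'v set) \<Rightarrow> (nat \<Rightarrow> 'v \<Rightarrow> 'v \<Rightarrow> bool) \<Rightarrow> ereal" where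
  "beta K V G = (INF q. s_q K V G q)"

end

theory Submission
  imports Defs
begin

text \<open>Both sequences are compared with their union U = G \<union> H, every edge of which joins vertices
  at distance at most L in G (resp. H). For such a pair G \<subseteq> U fix, for each edge ab of U not in G,
  a short G-walk from a to b and the bypass cycle formed by ab and that walk. Replacing every
  U-edge of a U-cycle of length at most q by its G-walk gives a closed G-walk of length at most
  Lq, and the difference of the two vectors is a combination of bypass cycles; hence
  dim C^q(U) \<le> dim C^{Lq}(G) + |E(U)| - |E(G)|. Conversely, for q > L the bypass cycles lie in
  C^q(U), and evaluating at the new edges shows that they are independent modulo the G-cycles,
  which vanish there; hence dim C^{q'}(G) + |E(U)| - |E(G)| \<le> dim C^q(U) for q' \<le> q. So
  |E| - dim C^q of G and of U bound each other after a change of q, and their infima over q agree.\<close>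

interpretation VS: vector_space "\<lambda>(c::'k::field) (f::'a \<Rightarrow> 'k) p. c * f p"
  by unfold_locales (simp_all add: fun_eq_iff algebra_simps)

lemma span_vanishing_at:
  fixes S :: "('a \<Rightarrow> 'k::field) set"
  assumes "v \<in> VS.span S" and "\<And>s. s \<in> S \<Longrightarrow> s p = 0"
  shows "v p = 0"
proof -
  have "VS.subspace {v :: 'a \<Rightarrow> 'k. v p = 0}"
    by (rule VS.subspaceI) auto
  then have "VS.span S \<subseteq> {v. v p = 0}"
    using assms(2) by (intro VS.span_minimal) auto
  then show ?thesis
    using assms(1) by auto
qed

lemma card_le_dim_if_independent:
  fixes S W :: "('a \<Rightarrow> 'k::field) set"
  assumes "VS.independent S" and "S \<subseteq> VS.span W" and "finite W"
  shows "card S \<le> VS.dim W"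
proof -
  obtain B where B: "B \<subseteq> W" "W \<subseteq> VS.span B" "card B = VS.dim W"
    by (rule VS.basis_exists)
  have "S \<subseteq> VS.span B"
    using assms(2) VS.span_mono[OF B(2)] by (simp add: VS.span_span)
  moreover have "finite B"
    using B(1) assms(3) by (rule finite_subset)
  ultimately show ?thesis
    using VS.independent_span_bound assms(1) B(3) by metis
qed

lemma dim_le_dim_add_card:
  fixes V W D :: "('a \<Rightarrow> 'k::field) set"
  assumes "V \<subseteq> VS.span (W \<union> D)" and "finite W" and "finite D"
  shows "VS.dim V \<le> VS.dim W + card D"
proof -
  obtain B where B: "B \<subseteq> W" "W \<subseteq> VS.span B" "card B = VS.dim W"
    by (rule VS.basis_exists)
  have "W \<union> D \<subseteq> VS.span (B \<union> D)"
    using B(2) VS.span_mono[of B "B \<union> D"] VS.span_superset[of "B \<union> D"] by blast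
  then have "V \<subseteq> VS.span (B \<union> D)"
    using assms(1) VS.span_minimal[OF _ VS.subspace_span] by blast
  then have "VS.dim V \<le> card (B \<union> D)"
    using assms finite_subset[OF B(1)] by (intro VS.dim_le_card) auto
  also have "\<dots> \<le> VS.dim W + card D"
    using card_Un_le[of B D] B(3) by simp
  finally show ?thesis .
qed

lemma independent_Un_dual_image:
  fixes B :: "('a \<Rightarrow> 'k::field) set" and c :: "'a \<Rightarrow> 'a \<Rightarrow> 'k"
  assumes "VS.independent B" and "finite B" and "finite T"
    and "\<And>b t. b \<in> B \<Longrightarrow> t \<in> T \<Longrightarrow> b t = 0"
    and "\<And>s t. s \<in> T \<Longrightarrow> t \<in> T \<Longrightarrow> c s t = (if s = t then 1 else 0)"
  shows "VS.independent (B \<union> c ` T) \<and> card (B \<union> c ` T) = card B + card T"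
  using assms(3-5)
proof (induction T rule: finite_induct)
  case empty
  then show ?case
    using assms(1) by simp
next
  case (insert t T)
  then have IH: "VS.independent (B \<union> c ` T)" "card (B \<union> c ` T) = card B + card T"
    by auto
  have "v t = 0" if "v \<in> B \<union> c ` T" for v
    using that insert by auto
  then have "c t \<notin> VS.span (B \<union> c ` T)"
    using span_vanishing_at insert.prems(2)[of t t] by force
  then have "c t \<notin> B \<union> c ` T"
    using VS.span_superset[of "B \<union> c ` T"] by blast
  moreover have "finite (B \<union> c ` T)"
    using assms(2) insert(1) by simp
  moreover have "B \<union> c ` insert t T = insert (c t) (B \<union> c ` T)"
    by blast
  ultimately show ?case
    using IH VS.independent_insertI[OF \<open>c t \<notin> VS.span (B \<union> c ` T)\<close> IH(1)] insert(1,2)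
    by simp
qed

lemma dim_add_card_le_dim:
  fixes W' W :: "('a \<Rightarrow> 'k::field) set" and c :: "'a \<Rightarrow> 'a \<Rightarrow> 'k"
  assumes "W' \<subseteq> VS.span W" and "c ` T \<subseteq> VS.span W" and "finite W" and "finite T"
    and "\<And>w t. w \<in> W' \<Longrightarrow> t \<in> T \<Longrightarrow> w t = 0"
    and "\<And>s t. s \<in> T \<Longrightarrow> t \<in> T \<Longrightarrow> c s t = (if s = t then 1 else 0)"
  shows "VS.dim W' + card T \<le> VS.dim W"
proof -
  obtain B where B: "B \<subseteq> W'" "VS.independent B" "card B = VS.dim W'"
    by (rule VS.basis_exists)
  have "finite B"
    using VS.independent_span_bound[OF assms(3) B(2)] B(1) assms(1) by blast
  then have "VS.independent (B \<union> c ` T)" "card (B \<union> c ` T) = card B + card T"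
    using independent_Un_dual_image[OF B(2) _ assms(4)] B(1) assms(5,6) by blast+
  moreover have "B \<union> c ` T \<subseteq> VS.span W"
    using B(1) assms(1,2) by blast
  ultimately show ?thesis
    using card_le_dim_if_independent[OF _ _ assms(3)] B(3) by metis
qed

lemma oedge_self [simp]: "oedge x x = 0"
  by (simp add: oedge_def fun_eq_iff)

lemma oedge_swap: "oedge y x = - oedge x y"
  by (simp add: oedge_def fun_eq_iff)

lemma oedge_apply_self: "x \<noteq> y \<Longrightarrow> oedge x y (x, y) = 1"
  unfolding oedge_def by simp

lemma oedge_apply_eq_0:
  assumes "(a, b) \<noteq> (x, y)" and "(a, b) \<noteq> (y, x)"
  shows "oedge x y (a, b) = 0"
  unfolding oedge_def if_not_P[OF assms(1)] if_not_P[OF assms(2)] by simp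

fun walk_vec :: "'v list \<Rightarrow> ('v \<times> 'v \<Rightarrow> 'k::field)" where
  "walk_vec (x # y # ys) = oedge x y + walk_vec (y # ys)"
| "walk_vec _ = 0"

lemma walk_vec_append: "walk_vec (xs @ v # ys) = walk_vec (xs @ [v]) + walk_vec (v # ys)"
  by (induction xs rule: induct_list012) (simp_all add: algebra_simps)

lemma walk_vec_rev: "(walk_vec (rev xs) :: 'v \<times> 'v \<Rightarrow> 'k::field) = - walk_vec xs"
proof (induction xs rule: walk_vec.induct)
  case (1 x y ys)
  have "(walk_vec (rev (x # y # ys)) :: 'v \<times> 'v \<Rightarrow> 'k) = walk_vec (rev (y # ys)) + oedge y x"
    using walk_vec_append[of "rev ys" y "[x]"] by simp
  also have "\<dots> = - (oedge x y + walk_vec (y # ys))"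
    by (simp only: 1 oedge_swap[of y x] minus_add_distrib add.commute)
  also have "\<dots> = - walk_vec (x # y # ys)"
    by (simp only: walk_vec.simps)
  finally show ?case .
qed simp_all

lemma walk_vec_conv_sum: "walk_vec xs = (\<lambda>p. \<Sum>i < length xs - 1. oedge (xs ! i) (xs ! Suc i) p)"
proof (induction xs rule: walk_vec.induct)
  case (1 x y ys)
  then show ?case
    by (simp add: fun_eq_iff sum.lessThan_Suc_shift del: sum.lessThan_Suc)
qed simp_all

lemma walk_vec_vanish:
  assumes "successively E xs" and "\<not> E a b" and "\<not> E b a"
  shows "walk_vec xs (a, b) = 0"
  using assms by (induction xs rule: walk_vec.induct) (auto intro: oedge_apply_eq_0)

lemma is_walk_iff_successively:
  "is_walk E x y xs \<longleftrightarrow> xs \<noteq> [] \<and> hd xs = x \<and> last xs = y \<and> successively E xs"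
  by (auto simp: is_walk_def successively_conv_nth)

lemma nth_append_hd_Suc:
  assumes "i < length xs"
  shows "(xs @ [hd xs]) ! Suc i = xs ! (Suc i mod length xs)"
proof (cases "Suc i < length xs")
  case False
  then have "Suc i = length xs" and "xs \<noteq> []"
    using assms by auto
  then show ?thesis
    by (simp add: hd_conv_nth nth_append)
qed (simp add: nth_append)

lemma cycles_upto_iff:
  "xs \<in> cycles_upto E q \<longleftrightarrow>
     3 \<le> length xs \<and> length xs \<le> q \<and> distinct xs \<and> successively E (xs @ [hd xs])"
proof -
  have "(xs @ [hd xs]) ! i = xs ! i" if "i < length xs" for i
    using that by (simp add: nth_append)
  then have "successively E (xs @ [hd xs]) \<longleftrightarrow>
      (\<forall>i < length xs. E (xs ! i) (xs ! (Suc i mod length xs)))"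
    by (simp add: successively_conv_nth nth_append_hd_Suc)
  then show ?thesis
    by (auto simp: cycles_upto_def)
qed

lemma cycle_vec_eq_walk_vec:
  assumes "xs \<noteq> []"
  shows "cycle_vec xs = walk_vec (xs @ [hd xs])"
  by (simp add: cycle_vec_def walk_vec_conv_sum nth_append nth_append_hd_Suc[symmetric])

lemma is_walk_append:
  assumes "is_walk E x v p" and "is_walk E v y q"
  shows "is_walk E x y (p @ tl q)"
  using assms by (cases q) (auto simp: is_walk_iff_successively successively_append_iff successively_Cons)

lemma is_walk_Cons:
  assumes "E x z" and "is_walk E z y ys"
  shows "is_walk E x y (x # ys)"
  using assms by (cases ys) (auto simp: is_walk_iff_successively)

lemma is_walk_rev:
  assumes "\<And>x y. E x y \<Longrightarrow> E y x" and "is_walk E x y xs"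
  shows "is_walk E y x (rev xs)"
  using assms by (auto simp: is_walk_iff_successively hd_rev last_rev intro: successively_mono)

lemma is_walk_mono:
  assumes "is_walk E x y xs" and "\<And>x y. E x y \<Longrightarrow> E' x y"
  shows "is_walk E' x y xs"
  using assms by (auto simp: is_walk_iff_successively intro: successively_mono)

lemma walk_vec_Cons: "ys \<noteq> [] \<Longrightarrow> walk_vec (x # ys) = oedge x (hd ys) + walk_vec ys"
  by (cases ys) simp_all

lemma walk_vec_append_tl:
  assumes "p \<noteq> []" and "q \<noteq> []" and "last p = hd q"
  shows "walk_vec (p @ tl q) = walk_vec p + walk_vec q"
proof -
  have p: "butlast p @ [last p] = p"
    using assms(1) by simp
  have q: "last p # tl q = q"
    using assms(2,3) by simp
  have "p @ tl q = butlast p @ last p # tl q"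
    by (subst p[symmetric]) simp
  then show ?thesis
    using walk_vec_append[of "butlast p" "last p" "tl q"] by (simp only: p q)
qed

lemma closed_walk_in_cycle_span:
  assumes "is_walk E x x w" and "length w \<le> Suc q"
  shows "walk_vec w \<in> VS.span (cycle_vec ` cycles_upto E q :: ('v \<times> 'v \<Rightarrow> 'k::field) set)"
  using assms
proof (induction "length w" arbitrary: w x rule: less_induct)
  case less
  let ?C = "cycle_vec ` cycles_upto E q :: ('v \<times> 'v \<Rightarrow> 'k) set"
  have walk: "w \<noteq> []" "hd w = x" "last w = x" "successively E w"
    using less.prems(1) by (simp_all add: is_walk_iff_successively)
  define xs where "xs = butlast w"
  have w: "w = xs @ [x]"
    using walk(1,3) append_butlast_last_id[of w] unfolding xs_def by simp
  consider "distinct xs" "3 \<le> length xs" | "length xs < 3" | "\<not> distinct xs"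
    using not_le by blast
  then show ?case
  proof cases
    case 1
    then have "xs \<noteq> []"
      by auto
    then have "hd xs = x"
      using walk(2) w by simp
    then have "xs \<in> cycles_upto E q"
      using 1 less.prems(2) walk(4) unfolding cycles_upto_iff w by simp
    then have "cycle_vec xs \<in> ?C"
      by (rule imageI)
    moreover have "cycle_vec xs = (walk_vec w :: 'v \<times> 'v \<Rightarrow> 'k)"
      using cycle_vec_eq_walk_vec[OF \<open>xs \<noteq> []\<close>] \<open>hd xs = x\<close> w by simp
    ultimately show ?thesis
      by (metis VS.span_base)
  next
    case 2
    then consider "w = [x]" | "w = [x, x]" | b where "w = [x, b, x]"
      using walk(2) unfolding w by (auto simp: numeral_3_eq_3 less_Suc_eq length_Suc_conv)
    then have "(walk_vec w :: 'v \<times> 'v \<Rightarrow> 'k) = 0"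
    proof cases
      case (3 b)
      then show ?thesis
        by (simp add: oedge_swap[of b x])
    qed simp_all
    then show ?thesis
      by (simp add: VS.span_zero)
  next
    case 3
    then obtain a v b c where "xs = a @ [v] @ b @ [v] @ c"
      using not_distinct_decomp by blast
    then have w_split: "w = a @ v # (b @ v # (c @ [x]))"
      using w by simp
    have "(walk_vec w :: 'v \<times> 'v \<Rightarrow> 'k) = walk_vec (a @ [v]) + walk_vec (v # b @ v # c @ [x])"
      unfolding w_split by (rule walk_vec_append)
    also have "walk_vec (v # b @ v # c @ [x]) = walk_vec (v # b @ [v]) + walk_vec (v # c @ [x])"
      using walk_vec_append[of "v # b" v "c @ [x]"] by simp
    also have "walk_vec (a @ [v]) + (walk_vec (v # b @ [v]) + walk_vec (v # c @ [x])) =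
        walk_vec (v # b @ [v]) + walk_vec (a @ v # c @ [x])"
      unfolding walk_vec_append[of a v "c @ [x]"] by (rule add.left_commute)
    finally have split: "(walk_vec w :: 'v \<times> 'v \<Rightarrow> 'k) =
        walk_vec (v # b @ [v]) + walk_vec (a @ v # c @ [x])" .
    have loop: "is_walk E v v (v # b @ [v])" and rest: "is_walk E x x (a @ v # c @ [x])"
      using walk(2,4) unfolding w_split
      by (auto simp: is_walk_iff_successively successively_append_iff successively_Cons hd_append)
    have "walk_vec (v # b @ [v]) \<in> VS.span ?C"
      by (rule less.hyps[OF _ loop]) (use less.prems(2) in \<open>simp_all add: w_split\<close>)
    moreover have "walk_vec (a @ v # c @ [x]) \<in> VS.span ?C"
      by (rule less.hyps[OF _ rest]) (use less.prems(2) in \<open>simp_all add: w_split\<close>)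
    ultimately show ?thesis
      unfolding split by (rule VS.span_add)
  qed
qed

lemma walk_reroute:
  fixes D :: "('v \<times> 'v \<Rightarrow> 'k::field) set"
  assumes detour: "\<And>x y. U x y \<Longrightarrow>
      \<exists>p. is_walk G x y p \<and> length p \<le> Suc L \<and> oedge x y - walk_vec p \<in> VS.span D"
    and "is_walk U x y w"
  shows "\<exists>w'. is_walk G x y w' \<and> length w' \<le> L * (length w - 1) + 1 \<and>
    walk_vec w - walk_vec w' \<in> VS.span D"
  using assms(2)
proof (induction w arbitrary: x)
  case Nil
  then show ?case
    by (simp add: is_walk_def)
next
  case (Cons z w)
  then have "z = x"
    by (simp add: is_walk_def)
  show ?case
  proof (cases w)
    case Nil
    then have "is_walk G x y [x]"
      using Cons.prems \<open>z = x\<close> by (simp add: is_walk_def)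
    moreover have "length [x] \<le> L * (length (z # w) - 1) + 1"
      by simp
    moreover have "walk_vec (z # w) - walk_vec [x] \<in> VS.span D"
      using Nil \<open>z = x\<close> VS.span_zero[of D] by (metis diff_self)
    ultimately show ?thesis
      by blast
  next
    case (Cons z' w'')
    then have "U x z'" and "is_walk U z' y w"
      using Cons.prems \<open>z = x\<close> by (simp_all add: is_walk_iff_successively)
    obtain R where R: "is_walk G z' y R" "length R \<le> L * (length w - 1) + 1"
      "walk_vec w - walk_vec R \<in> VS.span D"
      using Cons.IH[OF \<open>is_walk U z' y w\<close>] by blast
    obtain p where p: "is_walk G x z' p" "length p \<le> Suc L" "oedge x z' - walk_vec p \<in> VS.span D"
      using detour[OF \<open>U x z'\<close>] by blast
    have concat: "walk_vec (p @ tl R) = walk_vec p + walk_vec R"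
      using p(1) R(1) by (intro walk_vec_append_tl) (auto simp: is_walk_def)
    have step: "walk_vec (z # w) = oedge x z' + walk_vec w"
      using Cons \<open>z = x\<close> by simp
    have "walk_vec (z # w) - walk_vec (p @ tl R) =
        (oedge x z' - walk_vec p) + (walk_vec w - walk_vec R)"
      unfolding concat step by (simp add: algebra_simps)
    also have "\<dots> \<in> VS.span D"
      using p(3) R(3) by (rule VS.span_add)
    finally have "walk_vec (z # w) - walk_vec (p @ tl R) \<in> VS.span D" .
    moreover have "length (p @ tl R) \<le> L * (length (z # w) - 1) + 1"
      using p(2) R(2) unfolding Cons by simp
    ultimately show ?thesis
      using is_walk_append[OF p(1) R(1)] by blast
  qed
qed

lemma cycle_vec_vanish:
  assumes "xs \<in> cycles_upto E q" and "\<not> E a b" and "\<not> E b a"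
  shows "cycle_vec xs (a, b) = 0"
proof -
  have "xs \<noteq> []" and "successively E (xs @ [hd xs])"
    using assms(1) by (auto simp: cycles_upto_iff)
  then show ?thesis
    using cycle_vec_eq_walk_vec walk_vec_vanish assms(2,3) by metis
qed

lemma finite_cycles_upto:
  assumes "simple_graph V E"
  shows "finite (cycles_upto E q)"
proof (rule finite_subset)
  show "cycles_upto E q \<subseteq> {xs. set xs \<subseteq> V \<and> length xs \<le> q}"
  proof
    fix xs
    assume "xs \<in> cycles_upto E q"
    then have "length xs \<le> q" and "\<forall>i < length xs. E (xs ! i) (xs ! (Suc i mod length xs))"
      by (simp_all add: cycles_upto_def)
    then show "xs \<in> {xs. set xs \<subseteq> V \<and> length xs \<le> q}"
      using assms unfolding simple_graph_def by (metis in_set_conv_nth mem_Collect_eq subsetI)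
  qed
  show "finite {xs. set xs \<subseteq> V \<and> length xs \<le> q}"
    using assms by (intro finite_lists_length_le) (simp add: simple_graph_def)
qed

lemma cycles_upto_mono:
  assumes "\<And>x y. G x y \<Longrightarrow> U x y" and "q' \<le> q"
  shows "cycles_upto G q' \<subseteq> cycles_upto U q"
  unfolding cycles_upto_def using assms(1) order.trans[OF _ assms(2)] by blast

lemma finite_edge_set:
  assumes "simple_graph V E"
  shows "finite {{x, y} | x y. E x y}"
proof (rule finite_subset)
  show "{{x, y} | x y. E x y} \<subseteq> Pow V"
    using assms by (auto simp: simple_graph_def)
  show "finite (Pow V)"
    using assms by (simp add: simple_graph_def)
qed

lemma num_edges_eq_add_new:
  assumes "simple_graph V U" and "\<And>x y. G x y \<Longrightarrow> U x y" and "\<And>x y. G x y \<Longrightarrow> G y x"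
  shows "num_edges U = num_edges G + num_edges (\<lambda>x y. U x y \<and> \<not> G x y)"
proof -
  let ?E = "\<lambda>R. {{x, y} | x y. R x y}"
  have split: "?E U = ?E G \<union> ?E (\<lambda>x y. U x y \<and> \<not> G x y)"
    by (auto intro: assms(2))
  have "s \<notin> ?E (\<lambda>x y. U x y \<and> \<not> G x y)" if old: "s \<in> ?E G" for s
  proof
    obtain x y where s: "s = {x, y}" and "G x y"
      using old by blast
    assume "s \<in> ?E (\<lambda>x y. U x y \<and> \<not> G x y)"
    then obtain a b where "s = {a, b}" and "\<not> G a b"
      by blast
    then show False
      using s \<open>G x y\<close> assms(3)[of x y] by (auto simp: doubleton_eq_iff)
  qed
  then have "?E G \<inter> ?E (\<lambda>x y. U x y \<and> \<not> G x y) = {}"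
    by blast
  moreover have "finite (?E G)" and "finite (?E (\<lambda>x y. U x y \<and> \<not> G x y))"
    using finite_edge_set[OF assms(1)] unfolding split by simp_all
  ultimately show ?thesis
    unfolding num_edges_def split by (rule card_Un_disjoint[rotated 2])
qed

definition orientation :: "('v \<Rightarrow> 'v \<Rightarrow> bool) \<Rightarrow> ('v \<times> 'v) set \<Rightarrow> bool" where
  "orientation R N \<longleftrightarrow>
     (\<forall>x y. (x, y) \<in> N \<longrightarrow> R x y) \<and> (\<forall>x y. R x y \<longrightarrow> ((x, y) \<in> N \<longleftrightarrow> (y, x) \<notin> N))"

lemma orientationD:
  assumes "orientation R N"
  shows "(x, y) \<in> N \<Longrightarrow> R x y" and "R x y \<Longrightarrow> (x, y) \<in> N \<longleftrightarrow> (y, x) \<notin> N"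
  using assms unfolding orientation_def by blast+

lemma orientation_exists:
  assumes "\<And>x y. R x y \<Longrightarrow> R y x" and "\<And>x. \<not> R x x"
  obtains N where "orientation R N"
proof -
  \<comment> \<open>SOME on the unordered pair picks the same tail for (x, y) and (y, x).\<close>
  define N where "N = {(x, y). R x y \<and> x = (SOME z. z \<in> {x, y})}"
  have "(x, y) \<in> N \<longleftrightarrow> (y, x) \<notin> N" if "R x y" for x y
  proof -
    define c where "c = (SOME z. z \<in> {x, y})"
    have "c \<in> {x, y}"
      unfolding c_def by (rule someI[of _ x]) simp
    moreover have "(x, y) \<in> N \<longleftrightarrow> x = c"
      using that unfolding N_def c_def by simp
    moreover have "(SOME z. z \<in> {y, x}) = c"
      unfolding c_def by (simp only: insert_commute)
    then have "(y, x) \<in> N \<longleftrightarrow> y = c"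
      using assms(1)[OF that] by (simp only: N_def mem_Collect_eq case_prod_conv) simp
    moreover have "x \<noteq> y"
      using that assms(2) by blast
    ultimately show ?thesis
      by blast
  qed
  then have "orientation R N"
    unfolding orientation_def N_def by blast
  then show ?thesis
    by (rule that)
qed

lemma card_orientation:
  assumes "orientation R N"
  shows "card N = num_edges R"
proof -
  have inj: "inj_on (\<lambda>(x, y). {x, y}) N"
  proof (rule inj_onI, clarify)
    fix a b c d
    assume "(a, b) \<in> N" and "(c, d) \<in> N" and "{a, b} = {c, d}"
    then show "a = c \<and> b = d"
      using assms unfolding orientation_def doubleton_eq_iff by blast
  qed
  have "(\<lambda>(x, y). {x, y}) ` N = {{x, y} | x y. R x y}"
  proof (intro equalityI subsetI)
    fix s
    assume "s \<in> (\<lambda>(x, y). {x, y}) ` N"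
    then obtain x y where "(x, y) \<in> N" and "s = {x, y}"
      by auto
    then show "s \<in> {{x, y} | x y. R x y}"
      using assms unfolding orientation_def by blast
  next
    fix s
    assume "s \<in> {{x, y} | x y. R x y}"
    then obtain x y where "R x y" and s: "s = {x, y}"
      by blast
    then have "(x, y) \<in> N \<or> (y, x) \<in> N"
      using assms unfolding orientation_def by blast
    then show "s \<in> (\<lambda>(x, y). {x, y}) ` N"
    proof
      assume "(x, y) \<in> N"
      then show ?thesis
        unfolding s by (rule rev_image_eqI) simp
    next
      assume "(y, x) \<in> N"
      then show ?thesis
        unfolding s by (rule rev_image_eqI) (simp add: insert_commute)
    qed
  qed
  then show ?thesis
    unfolding num_edges_def using card_image[OF inj] by simp
qed

lemma gdist_le_imp_walk:
  assumes "gdist E x y \<le> enat L"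
  obtains p where "is_walk E x y p" and "length p \<le> Suc L"
proof -
  have walk: "\<exists>xs. is_walk E x y xs"
    using assms by (auto simp: gdist_def split: if_splits)
  let ?k = "LEAST k. \<exists>xs. is_walk E x y xs \<and> length xs = Suc k"
  have "\<exists>k xs. is_walk E x y xs \<and> length xs = Suc k"
    using walk by (metis is_walk_def length_greater_0_conv Suc_pred)
  then have "\<exists>xs. is_walk E x y xs \<and> length xs = Suc ?k"
    by (rule LeastI_ex)
  moreover have "?k \<le> L"
    using assms walk by (simp add: gdist_def)
  ultimately show ?thesis
    using that by auto
qed

lemma gdist_le_1_if_edge:
  assumes "E x y"
  shows "gdist E x y \<le> 1"
proof -
  have walk: "is_walk E x y [x, y]"
    using assms by (simp add: is_walk_iff_successively)
  then have "(LEAST k. \<exists>xs. is_walk E x y xs \<and> length xs = Suc k) \<le> 1"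
    by (intro Least_le) auto
  then show ?thesis
    using walk by (auto simp: gdist_def one_enat_def)
qed

lemma s_q_mono:
  assumes "\<And>n. real (num_edges (G n)) - real (dim_cycle_space K (G n) a)
      \<le> real (num_edges (H n)) - real (dim_cycle_space K (H n) b)"
  shows "s_q K V G a \<le> s_q K V H b"
proof -
  have "ereal ((real (num_edges (G n)) - real (dim_cycle_space K (G n) a)) / real (card (V n)))
      \<le> ereal ((real (num_edges (H n)) - real (dim_cycle_space K (H n) b)) / real (card (V n)))" for n
    using divide_right_mono[OF assms[of n], of "real (card (V n))"] by simp
  then have "liminf (\<lambda>n. ereal ((real (num_edges (G n)) - real (dim_cycle_space K (G n) a)) / real (card (V n))))
    \<le> liminf (\<lambda>n. ereal ((real (num_edges (H n)) - real (dim_cycle_space K (H n) b)) / real (card (V n))))"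
    by (intro Liminf_mono always_eventually) simp
  then show ?thesis
    unfolding s_q_def by (rule ereal_minus_mono) simp
qed

lemma beta_le_if_s_q_le:
  assumes "\<And>q. \<exists>q'. s_q K V G q' \<le> s_q K V H q"
  shows "beta K V G \<le> beta K V H"
  unfolding beta_def
proof (rule INF_greatest)
  fix q
  obtain q' where "s_q K V G q' \<le> s_q K V H q"
    using assms by blast
  then show "(INF q. s_q K V G q) \<le> s_q K V H q"
    by (rule INF_lower2[OF UNIV_I])
qed

locale bridged_subgraph =
  fixes V :: "'v set" and G U :: "'v \<Rightarrow> 'v \<Rightarrow> bool" and L :: nat
  assumes simple_G: "simple_graph V G" and simple_U: "simple_graph V U"
    and subgraph: "\<And>x y. G x y \<Longrightarrow> U x y"
    and L_pos: "0 < L"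
    and bridged: "\<And>x y. U x y \<Longrightarrow> gdist G x y \<le> enat L"
begin

definition new_edge :: "'v \<Rightarrow> 'v \<Rightarrow> bool" where
  "new_edge x y \<longleftrightarrow> U x y \<and> \<not> G x y"

definition short_walk :: "'v \<Rightarrow> 'v \<Rightarrow> 'v list" where
  "short_walk x y = (SOME p. is_walk G x y p \<and> length p \<le> Suc L)"

definition bypass_vec :: "'v \<Rightarrow> 'v \<Rightarrow> 'v \<times> 'v \<Rightarrow> 'k::field" where
  "bypass_vec x y = oedge x y - walk_vec (short_walk x y)"

lemma G_sym: "G x y \<Longrightarrow> G y x"
  using simple_G by (simp add: simple_graph_def)

lemma U_sym: "U x y \<Longrightarrow> U y x"
  using simple_U by (simp add: simple_graph_def)

lemma U_irrefl: "\<not> U x x"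
  using simple_U by (simp add: simple_graph_def)

lemma short_walk:
  assumes "U x y"
  shows "is_walk G x y (short_walk x y)" and "length (short_walk x y) \<le> Suc L"
proof -
  obtain p where "is_walk G x y p" and "length p \<le> Suc L"
    using bridged[OF assms] by (rule gdist_le_imp_walk)
  then have "\<exists>p. is_walk G x y p \<and> length p \<le> Suc L"
    by blast
  then have "is_walk G x y (short_walk x y) \<and> length (short_walk x y) \<le> Suc L"
    unfolding short_walk_def by (rule someI_ex)
  then show "is_walk G x y (short_walk x y)" and "length (short_walk x y) \<le> Suc L"
    by simp_all
qed

lemma num_edges_U: "num_edges U = num_edges G + num_edges new_edge"
  unfolding new_edge_def[abs_def] using simple_U subgraph G_sym by (rule num_edges_eq_add_new)

lemma new_edge_orientation_exists:
  obtains N where "orientation new_edge N" and "finite N"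
proof -
  have "new_edge x y \<Longrightarrow> new_edge y x" for x y
    using U_sym[of x y] G_sym[of y x] by (auto simp: new_edge_def)
  moreover have "\<not> new_edge x x" for x
    using U_irrefl by (simp add: new_edge_def)
  ultimately obtain N where N: "orientation new_edge N"
    by (rule orientation_exists)
  have "N \<subseteq> V \<times> V"
  proof (rule subrelI)
    fix a b
    assume "(a, b) \<in> N"
    then have "U a b"
      using orientationD(1)[OF N] by (simp add: new_edge_def)
    then show "(a, b) \<in> V \<times> V"
      using simple_U by (simp add: simple_graph_def)
  qed
  then have "finite N"
    by (rule finite_subset) (use simple_U in \<open>simp add: simple_graph_def\<close>)
  with N show ?thesis
    by (rule that)
qed

lemma bypass_vec_apply:
  assumes "U a b" and "new_edge c d"
  shows "(bypass_vec a b (c, d) :: 'k::field) = oedge a b (c, d)"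
proof -
  have "\<not> G c d" and "\<not> G d c"
    using assms G_sym[of d c] by (auto simp: new_edge_def)
  moreover have "successively G (short_walk a b)"
    using short_walk(1)[OF assms(1)] by (simp add: is_walk_iff_successively)
  ultimately have "walk_vec (short_walk a b) (c, d) = 0"
    by (intro walk_vec_vanish)
  then show ?thesis
    unfolding bypass_vec_def minus_apply by simp
qed

lemma bypass_vec_delta:
  assumes "orientation new_edge N" and "s \<in> N" and "t \<in> N"
  shows "(case_prod bypass_vec s t :: 'k::field) = (if s = t then 1 else 0)"
proof -
  obtain a b c d where st: "s = (a, b)" "t = (c, d)"
    by fastforce
  have ab: "new_edge a b" and cd: "new_edge c d"
    using orientationD(1)[OF assms(1)] assms(2,3) st by auto
  then have "U a b" and "a \<noteq> b"
    using U_irrefl by (auto simp: new_edge_def)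
  have "(b, a) \<notin> N"
    using orientationD(2)[OF assms(1) ab] assms(2) st by simp
  then have "(c, d) \<noteq> (b, a)"
    using assms(3) st by blast
  show ?thesis
  proof (cases "s = t")
    case True
    then show ?thesis
      using st bypass_vec_apply[OF \<open>U a b\<close> cd, where 'k='k] oedge_apply_self[OF \<open>a \<noteq> b\<close>]
      by simp
  next
    case False
    then have "(c, d) \<noteq> (a, b)"
      using st by auto
    then have "oedge a b (c, d) = 0"
      using \<open>(c, d) \<noteq> (b, a)\<close> by (rule oedge_apply_eq_0)
    then show ?thesis
      using False st bypass_vec_apply[OF \<open>U a b\<close> cd, where 'k='k] by auto
  qed
qed

lemma bypass_vec_in_cycle_span:
  assumes "U a b" and "Suc L \<le> q"
  shows "bypass_vec a b \<in> VS.span (cycle_vec ` cycles_upto U q :: ('v \<times> 'v \<Rightarrow> 'k::field) set)"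
proof -
  have "is_walk G b a (rev (short_walk a b))"
    using G_sym short_walk(1)[OF assms(1)] by (rule is_walk_rev)
  then have rev_walk: "is_walk U b a (rev (short_walk a b))"
    by (rule is_walk_mono) (rule subgraph)
  have "is_walk U a a (a # rev (short_walk a b))"
    using assms(1) rev_walk by (rule is_walk_Cons)
  moreover have "length (a # rev (short_walk a b)) \<le> Suc q"
    using short_walk(2)[OF assms(1)] assms(2) by simp
  ultimately have "walk_vec (a # rev (short_walk a b))
      \<in> VS.span (cycle_vec ` cycles_upto U q :: ('v \<times> 'v \<Rightarrow> 'k) set)"
    by (rule closed_walk_in_cycle_span)
  moreover have "rev (short_walk a b) \<noteq> []" and "hd (rev (short_walk a b)) = b"
    using rev_walk by (simp_all add: is_walk_iff_successively)
  then have "walk_vec (a # rev (short_walk a b)) = (bypass_vec a b :: 'v \<times> 'v \<Rightarrow> 'k)"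
    unfolding walk_vec_Cons[OF \<open>rev (short_walk a b) \<noteq> []\<close>] walk_vec_rev bypass_vec_def
    by (simp only: diff_conv_add_uminus)
  ultimately show ?thesis
    by (simp only:)
qed

lemma edge_detour:
  assumes "orientation new_edge N" and "U x y"
  shows "\<exists>p. is_walk G x y p \<and> length p \<le> Suc L \<and>
    oedge x y - walk_vec p \<in> VS.span (case_prod bypass_vec ` N :: ('v \<times> 'v \<Rightarrow> 'k::field) set)"
proof -
  let ?D = "case_prod bypass_vec ` N :: ('v \<times> 'v \<Rightarrow> 'k) set"
  consider "G x y" | "(x, y) \<in> N" | "(y, x) \<in> N"
    using orientationD(2)[OF assms(1), of x y] assms(2) by (auto simp: new_edge_def)
  then show ?thesis
  proof cases
    case 1
    then have "is_walk G x y [x, y]"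
      by (simp add: is_walk_iff_successively)
    moreover have "oedge x y - walk_vec [x, y] = (0 :: 'v \<times> 'v \<Rightarrow> 'k)"
      by simp
    ultimately show ?thesis
      using L_pos VS.span_zero by (intro exI[of _ "[x, y]"]) simp
  next
    case 2
    then have "bypass_vec x y \<in> ?D"
      by (rule rev_image_eqI) simp
    then have "oedge x y - walk_vec (short_walk x y) \<in> VS.span ?D"
      unfolding bypass_vec_def by (rule VS.span_base)
    then show ?thesis
      using short_walk[OF assms(2)] by blast
  next
    case 3
    have "U y x"
      using U_sym[OF assms(2)] .
    have "bypass_vec y x \<in> ?D"
      using 3 by (rule rev_image_eqI) simp
    then have "- bypass_vec y x \<in> VS.span ?D"
      by (intro VS.span_neg VS.span_base)
    moreover have "- bypass_vec y x = oedge x y - (walk_vec (rev (short_walk y x)) :: 'v \<times> 'v \<Rightarrow> 'k)"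
      unfolding bypass_vec_def walk_vec_rev oedge_swap[of y x]
      by (simp only: minus_diff_eq diff_minus_eq_add add.commute)
    moreover have "is_walk G x y (rev (short_walk y x))"
      using G_sym short_walk(1)[OF \<open>U y x\<close>] by (rule is_walk_rev)
    ultimately show ?thesis
      using short_walk(2)[OF \<open>U y x\<close>] by (metis length_rev)
  qed
qed

lemma dim_cycle_space_supergraph_le:
  "dim_cycle_space TYPE('k::field) U q \<le> dim_cycle_space TYPE('k) G (L * q) + num_edges new_edge"
proof -
  obtain N where N: "orientation new_edge N" "finite N"
    by (rule new_edge_orientation_exists)
  let ?D = "case_prod bypass_vec ` N :: ('v \<times> 'v \<Rightarrow> 'k) set"
  let ?CG = "cycle_vec ` cycles_upto G (L * q) :: ('v \<times> 'v \<Rightarrow> 'k) set"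
  have "cycle_vec xs \<in> VS.span (?CG \<union> ?D)" if "xs \<in> cycles_upto U q" for xs
  proof -
    let ?w = "xs @ [hd xs]"
    have "xs \<noteq> []" and "length xs \<le> q" and "successively U ?w"
      using that by (auto simp: cycles_upto_iff)
    then have "is_walk U (hd xs) (hd xs) ?w"
      by (simp add: is_walk_iff_successively)
    with edge_detour[OF N(1)] have "\<exists>w'. is_walk G (hd xs) (hd xs) w' \<and>
        length w' \<le> L * (length ?w - 1) + 1 \<and> walk_vec ?w - walk_vec w' \<in> VS.span ?D"
      by (rule walk_reroute)
    then obtain w' where w': "is_walk G (hd xs) (hd xs) w'"
      "length w' \<le> L * (length ?w - 1) + 1" "walk_vec ?w - walk_vec w' \<in> VS.span ?D"
      by blast
    have "length w' \<le> L * length xs + 1"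
      using w'(2) by simp
    also have "\<dots> \<le> Suc (L * q)"
      using \<open>length xs \<le> q\<close> by simp
    finally have "walk_vec w' \<in> VS.span ?CG"
      by (rule closed_walk_in_cycle_span[OF w'(1)])
    moreover have "VS.span ?CG \<subseteq> VS.span (?CG \<union> ?D)" and "VS.span ?D \<subseteq> VS.span (?CG \<union> ?D)"
      by (simp_all add: VS.span_mono)
    ultimately have "(walk_vec ?w - walk_vec w') + walk_vec w' \<in> VS.span (?CG \<union> ?D)"
      using w'(3) by (intro VS.span_add) blast+
    then show ?thesis
      by (simp only: cycle_vec_eq_walk_vec[OF \<open>xs \<noteq> []\<close>] diff_add_cancel)
  qed
  then have "cycle_vec ` cycles_upto U q \<subseteq> VS.span (?CG \<union> ?D)"
    by blast
  then have "VS.dim (cycle_vec ` cycles_upto U q :: ('v \<times> 'v \<Rightarrow> 'k) set) \<le> VS.dim ?CG + card ?D"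
    by (rule dim_le_dim_add_card) (simp_all add: finite_cycles_upto[OF simple_G] N(2))
  also have "card ?D \<le> num_edges new_edge"
    using card_image_le[OF N(2)] card_orientation[OF N(1)] by simp
  finally show ?thesis
    unfolding dim_cycle_space_def by simp
qed

lemma dim_cycle_space_le_supergraph:
  assumes "q' \<le> q" and "Suc L \<le> q"
  shows "dim_cycle_space TYPE('k::field) G q' + num_edges new_edge \<le> dim_cycle_space TYPE('k) U q"
proof -
  obtain N where N: "orientation new_edge N" "finite N"
    by (rule new_edge_orientation_exists)
  let ?CU = "cycle_vec ` cycles_upto U q :: ('v \<times> 'v \<Rightarrow> 'k) set"
  let ?CG = "cycle_vec ` cycles_upto G q' :: ('v \<times> 'v \<Rightarrow> 'k) set"
  have "VS.dim ?CG + card N \<le> VS.dim ?CU"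
  proof (rule dim_add_card_le_dim[where c = "case_prod bypass_vec"])
    show "?CG \<subseteq> VS.span ?CU"
      using image_mono[OF cycles_upto_mono[OF subgraph assms(1)]] VS.span_superset by (rule order.trans)
    show "case_prod bypass_vec ` N \<subseteq> VS.span ?CU"
    proof (rule image_subsetI)
      fix t
      assume "t \<in> N"
      then obtain a b where t: "t = (a, b)" and "U a b"
        using orientationD(1)[OF N(1)] by (cases t) (auto simp: new_edge_def)
      then show "case_prod bypass_vec t \<in> VS.span ?CU"
        using bypass_vec_in_cycle_span[OF _ assms(2)] by simp
    qed
    show "finite ?CU"
      using finite_cycles_upto[OF simple_U] by simp
    show "finite N"
      by (rule N(2))
    show "w t = 0" if "w \<in> ?CG" and "t \<in> N" for w t
    proof -
      obtain a b where t: "t = (a, b)" and "new_edge a b"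
        using \<open>t \<in> N\<close> orientationD(1)[OF N(1)] by (cases t) auto
      then have "\<not> G a b" and "\<not> G b a"
        using G_sym[of b a] by (auto simp: new_edge_def)
      obtain xs where w: "w = cycle_vec xs" and "xs \<in> cycles_upto G q'"
        using \<open>w \<in> ?CG\<close> by (rule imageE)
      show ?thesis
        unfolding w t using \<open>xs \<in> cycles_upto G q'\<close> \<open>\<not> G a b\<close> \<open>\<not> G b a\<close>
        by (rule cycle_vec_vanish)
    qed
    show "case_prod bypass_vec s t = (if s = t then 1 else 0)" if "s \<in> N" and "t \<in> N" for s t
      using N(1) that by (rule bypass_vec_delta)
  qed
  then show ?thesis
    using card_orientation[OF N(1)] unfolding dim_cycle_space_def by simp
qed

lemma excess_le_excess_supergraph:
  "real (num_edges G) - real (dim_cycle_space TYPE('k::field) G (L * q))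
     \<le> real (num_edges U) - real (dim_cycle_space TYPE('k) U q)"
  using dim_cycle_space_supergraph_le[where 'k = 'k, of q] unfolding num_edges_U by linarith

lemma excess_supergraph_le_excess:
  assumes "q' \<le> q" and "Suc L \<le> q"
  shows "real (num_edges U) - real (dim_cycle_space TYPE('k::field) U q)
     \<le> real (num_edges G) - real (dim_cycle_space TYPE('k) G q')"
  using dim_cycle_space_le_supergraph[where 'k = 'k, OF assms] unfolding num_edges_U by linarith

end

lemma beta_eq_if_bridged_subgraph:
  assumes "\<And>n. bridged_subgraph (V n) (G n) (U n) L"
  shows "beta TYPE('k::field) V G = beta TYPE('k) V U"
proof (rule antisym)
  show "beta TYPE('k) V G \<le> beta TYPE('k) V U"
  proof (rule beta_le_if_s_q_le)
    fix q
    have "s_q TYPE('k) V G (L * q) \<le> s_q TYPE('k) V U q"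
      by (rule s_q_mono, rule bridged_subgraph.excess_le_excess_supergraph[OF assms])
    then show "\<exists>q'. s_q TYPE('k) V G q' \<le> s_q TYPE('k) V U q"
      by blast
  qed
  show "beta TYPE('k) V U \<le> beta TYPE('k) V G"
  proof (rule beta_le_if_s_q_le)
    fix q
    have "s_q TYPE('k) V U (max q (Suc L)) \<le> s_q TYPE('k) V G q"
      by (rule s_q_mono, rule bridged_subgraph.excess_supergraph_le_excess[OF assms]) simp_all
    then show "\<exists>q'. s_q TYPE('k) V U q' \<le> s_q TYPE('k) V G q"
      by blast
  qed
qed

lemma bridged_subgraph_sup:
  assumes "simple_graph V G" and "simple_graph V H" and "0 < L"
    and "\<forall>x\<in>V. \<forall>y\<in>V. gdist G x y \<le> enat L * gdist H x y"
  shows "bridged_subgraph V G (sup G H) L"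
proof
  show "simple_graph V (sup G H)"
    using assms(1,2) unfolding simple_graph_def by auto
  show "gdist G x y \<le> enat L" if "sup G H x y" for x y
  proof (cases "G x y")
    case True
    then have "gdist G x y \<le> 1"
      by (rule gdist_le_1_if_edge)
    also have "\<dots> \<le> enat L"
      using assms(3) by (simp add: one_enat_def)
    finally show ?thesis .
  next
    case False
    then have "H x y"
      using that by simp
    then have "x \<in> V" and "y \<in> V"
      using assms(2) by (auto simp: simple_graph_def)
    then have "gdist G x y \<le> enat L * gdist H x y"
      using assms(4) by blast
    also have "\<dots> \<le> enat L * 1"
      using gdist_le_1_if_edge[of H, OF \<open>H x y\<close>] by (rule mult_left_mono) simp
    finally show ?thesis
      by simp
  qed
qed (use assms in auto)

theorem proposition2:
  fixes V :: "nat \<Rightarrow> 'v set" and G H :: "nat \<Rightarrow> 'v \<Rightarrow> 'v \<Rightarrow> bool"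
  assumes "graph_seq V G" and "graph_seq V H" and "seq_equiv V G H"
  shows "beta TYPE('k::field) V G = beta TYPE('k) V H"
proof -
  obtain L1 where L1: "0 < L1" "\<forall>n. \<forall>x\<in>V n. \<forall>y\<in>V n. gdist (G n) x y \<le> enat L1 * gdist (H n) x y"
    using assms(3) unfolding seq_equiv_def seq_prec_def by blast
  obtain L2 where L2: "0 < L2" "\<forall>n. \<forall>x\<in>V n. \<forall>y\<in>V n. gdist (H n) x y \<le> enat L2 * gdist (G n) x y"
    using assms(3) unfolding seq_equiv_def seq_prec_def by blast
  have simple: "simple_graph (V n) (G n)" "simple_graph (V n) (H n)" for n
    using assms(1,2) unfolding graph_seq_def by blast+
  have "beta TYPE('k) V G = beta TYPE('k) V (\<lambda>n. sup (G n) (H n))"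
    using bridged_subgraph_sup[OF simple L1(1)] L1(2) by (intro beta_eq_if_bridged_subgraph) blast
  also have "\<dots> = beta TYPE('k) V (\<lambda>n. sup (H n) (G n))"
    by (simp add: sup_commute)
  also have "\<dots> = beta TYPE('k) V H"
    using bridged_subgraph_sup[OF simple(2,1) L2(1)] L2(2)
    by (intro beta_eq_if_bridged_subgraph[symmetric]) blast
  finally show ?thesis .
qed

end
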